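(* Let $D'$ be a digraph and $T$ a 1-optimal out-branching of $D'$. For each $v\in V(T)$ define the bag $X_v=\{u,v\}\cup \mathrm{BrSucc}(T)\cup\mathrm{Leaf}(T)\cup\mathrm{Head}(\mathrm{Back}_{D'}^T(v))$, where $u$ is the in-neighbor of $v$ in $T$ (and $u$ is omitted if $v$ is the root of $T$). Then $(\{X_v: v\in V(T)\}, T)$, with $T$ regarded as an undirected tree, is a tree decomposition of $D'$ (with arc directions ignored).
   Context: An out-tree is a subgraph that is a tree (ignoring directions) with one vertex (the root) of in-degree $0$ and all others of in-degree $1$; an out-branching is a spanning out-tree. $\mathrm{Leaf}(T)$ is the set of vertices of out-degree $0$ in $T$; a branch vertex has out-degree at least $2$ in $T$; $\mathrm{BrSucc}(T)$ is the set of vertices whose in-neighbor in $T$ is a branch vertex. Write $u\preceq_T v$ if $v$ is reachable from $u$ in $T$, $u\prec_T v$ if also $u\ne v$. $\mathrm{Back}_{D'}^T(z)=\{(a,b)\in A(D'): b\prec_T z\preceq_T a\}$, and $\mathrm{Head}(B)$ is the set of heads of arcs of $B$. For an arc $(a,b)\in A(D')\setminus A(T)$ with $b$ not the root, the 1-change for $(a,b)$ replaces the arc of $T$ entering $b$ by $(a,b)$. $T$ is 1-optimal if no 1-change yields an out-branching with more leaves. A tree decomposition of a digraph is a pair consisting of a tree $U$ and bags $X_i\subseteq V$ ($i\in V(U)$) covering all vertices, such that each arc has both endpoints in some bag and, for each vertex, the nodes whose bags contain it form a subtree of $U$. *)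

theory Defs
  imports Main
begin

definition digraph :: "'a set \<Rightarrow> ('a \<times> 'a) set \<Rightarrow> bool" where
  "digraph V A \<longleftrightarrow> finite V \<and> A \<subseteq> V \<times> V"

definition uconnected :: "'a set \<Rightarrow> 'a set set \<Rightarrow> bool" where
  "uconnected S E \<longleftrightarrow>
     (\<forall>i\<in>S. \<forall>j\<in>S. (i, j) \<in> {(p, q). p \<in> S \<and> q \<in> S \<and> {p, q} \<in> E}\<^sup>*)"

definition has_ucycle :: "'a set \<Rightarrow> 'a set set \<Rightarrow> bool" where
  "has_ucycle N E \<longleftrightarrow> (\<exists>vs. length vs \<ge> 3 \<and> distinct vs \<and> set vs \<subseteq> N \<and>
      (\<forall>i. Suc i < length vs \<longrightarrow> {vs ! i, vs ! Suc i} \<in> E) \<and> {last vs, hd vs} \<in> E)"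

definition utree :: "'a set \<Rightarrow> 'a set set \<Rightarrow> bool" where
  "utree N E \<longleftrightarrow> finite N \<and> N \<noteq> {} \<and>
     (\<forall>e\<in>E. \<exists>a b. e = {a, b} \<and> a \<noteq> b \<and> a \<in> N \<and> b \<in> N) \<and>
     uconnected N E \<and> \<not> has_ucycle N E"

definition uedges :: "('a \<times> 'a) set \<Rightarrow> 'a set set" where
  "uedges B = {{a, b} | a b. (a, b) \<in> B}"

definition indeg :: "('a \<times> 'a) set \<Rightarrow> 'a \<Rightarrow> nat" where
  "indeg B v = card {u. (u, v) \<in> B}"

definition outdeg :: "('a \<times> 'a) set \<Rightarrow> 'a \<Rightarrow> nat" where
  "outdeg B v = card {w. (v, w) \<in> B}"

definition out_tree :: "'a set \<Rightarrow> ('a \<times> 'a) set \<Rightarrow> bool" where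
  "out_tree VT B \<longleftrightarrow> B \<subseteq> VT \<times> VT \<and> utree VT (uedges B) \<and>
     (\<exists>r\<in>VT. indeg B r = 0 \<and> (\<forall>v\<in>VT - {r}. indeg B v = 1))"

definition out_branching :: "'a set \<Rightarrow> ('a \<times> 'a) set \<Rightarrow> ('a \<times> 'a) set \<Rightarrow> bool" where
  "out_branching V A T \<longleftrightarrow> T \<subseteq> A \<and> out_tree V T"

definition out_root :: "'a set \<Rightarrow> ('a \<times> 'a) set \<Rightarrow> 'a" where
  "out_root V T = (THE r. r \<in> V \<and> indeg T r = 0)"

definition Leaf :: "'a set \<Rightarrow> ('a \<times> 'a) set \<Rightarrow> 'a set" where
  "Leaf V T = {v \<in> V. outdeg T v = 0}"

definition branch_vertex :: "('a \<times> 'a) set \<Rightarrow> 'a \<Rightarrow> bool" where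
  "branch_vertex T v \<longleftrightarrow> outdeg T v \<ge> 2"

definition BrSucc :: "('a \<times> 'a) set \<Rightarrow> 'a set" where
  "BrSucc T = {w. \<exists>v. (v, w) \<in> T \<and> branch_vertex T v}"

definition preceq :: "('a \<times> 'a) set \<Rightarrow> 'a \<Rightarrow> 'a \<Rightarrow> bool" where
  "preceq T u v \<longleftrightarrow> (u, v) \<in> T\<^sup>*"

definition prec :: "('a \<times> 'a) set \<Rightarrow> 'a \<Rightarrow> 'a \<Rightarrow> bool" where
  "prec T u v \<longleftrightarrow> preceq T u v \<and> u \<noteq> v"

definition Back :: "('a \<times> 'a) set \<Rightarrow> ('a \<times> 'a) set \<Rightarrow> 'a \<Rightarrow> ('a \<times> 'a) set" where
  "Back A T z = {(a, b) \<in> A. prec T b z \<and> preceq T z a}"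

definition Head :: "('a \<times> 'a) set \<Rightarrow> 'a set" where
  "Head B = snd ` B"

definition one_change :: "('a \<times> 'a) set \<Rightarrow> 'a \<times> 'a \<Rightarrow> ('a \<times> 'a) set" where
  "one_change T e = {(x, y) \<in> T. y \<noteq> snd e} \<union> {e}"

definition one_optimal :: "'a set \<Rightarrow> ('a \<times> 'a) set \<Rightarrow> ('a \<times> 'a) set \<Rightarrow> bool" where
  "one_optimal V A T \<longleftrightarrow> out_branching V A T \<and>
     (\<forall>(a, b) \<in> A - T. b \<noteq> out_root V T \<longrightarrow>
        out_branching V A (one_change T (a, b)) \<longrightarrow>
        \<not> card (Leaf V (one_change T (a, b))) > card (Leaf V T))"

definition tree_decomposition ::
  "'a set \<Rightarrow> ('a \<times> 'a) set \<Rightarrow> 'i set \<Rightarrow> 'i set set \<Rightarrow> ('i \<Rightarrow> 'a set) \<Rightarrow> bool" where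
  "tree_decomposition V A N E X \<longleftrightarrow> utree N E \<and>
     (\<forall>i\<in>N. X i \<subseteq> V) \<and> (\<Union>i\<in>N. X i) = V \<and>
     (\<forall>(x, y)\<in>A. \<exists>i\<in>N. x \<in> X i \<and> y \<in> X i) \<and>
     (\<forall>x\<in>V. uconnected {i \<in> N. x \<in> X i} E)"

end

theory Submission
  imports Defs
begin

text \<open>
  An out-branching is the same as an assignment of unique parents under which every vertex is
  reachable from the root. Depths along T are then well defined, which rules out undirected
  cycles and shows that a 1-change avoiding the subtree of its head is again an out-branching.

  A vertex x that is neither a leaf nor a successor of a branch vertex lies in the bag of i only
  if i = x, i is a child of x, or x \<prec> i \<preceq> a for an arc (a, x); in each case the
  whole T-path from x to i consists of such vertices, so these bags form a subtree.

  An arc (a, b) lies in a common bag unless b is not below a, a is not a leaf and b is not a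
  successor of a branch vertex. But then b is the only child of its parent p, and the 1-change
  for (a, b) is an out-branching in which p has become a leaf and a is still no leaf,
  contradicting 1-optimality.
\<close>

lemma finite_in_arcs: "finite V \<Longrightarrow> T \<subseteq> V \<times> V \<Longrightarrow> finite {u. (u, v) \<in> T}"
  by (rule finite_subset[of _ V]) auto

lemma finite_out_arcs: "finite V \<Longrightarrow> T \<subseteq> V \<times> V \<Longrightarrow> finite {w. (v, w) \<in> T}"
  by (rule finite_subset[of _ V]) auto

definition rooted :: "'a set \<Rightarrow> ('a \<times> 'a) set \<Rightarrow> 'a \<Rightarrow> bool" where
  "rooted V T r \<longleftrightarrow> finite V \<and> T \<subseteq> V \<times> V \<and> r \<in> V \<and> (\<forall>u. (u, r) \<notin> T) \<and>
     (\<forall>v\<in>V - {r}. \<exists>!u. (u, v) \<in> T) \<and> (\<forall>v\<in>V. (r, v) \<in> T\<^sup>*)"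

lemma rootedD:
  assumes "rooted V T r"
  shows "finite V" "T \<subseteq> V \<times> V" "r \<in> V" "(u, r) \<notin> T"
    "v \<in> V \<Longrightarrow> v \<noteq> r \<Longrightarrow> \<exists>!u. (u, v) \<in> T" "v \<in> V \<Longrightarrow> (r, v) \<in> T\<^sup>*"
  using assms unfolding rooted_def by blast+

lemma rooted_parent_unique:
  assumes "rooted V T r" "(u, v) \<in> T" "(u', v) \<in> T"
  shows "u = u'"
  using assms rootedD[OF assms(1)] by blast

definition depth :: "('a \<times> 'a) set \<Rightarrow> 'a \<Rightarrow> 'a \<Rightarrow> nat" where
  "depth T r v = (THE n. (r, v) \<in> T ^^ n)"

lemma rooted_relpow_unique:
  assumes R: "rooted V T r"
  shows "(r, v) \<in> T ^^ n \<Longrightarrow> (r, v) \<in> T ^^ m \<Longrightarrow> n = m"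
proof (induction n arbitrary: m v)
  case 0
  then have "v = r" by simp
  show ?case
  proof (cases m)
    case (Suc k)
    with 0 obtain q where "(q, v) \<in> T" by (meson relpow_Suc_E)
    with \<open>v = r\<close> show ?thesis using rootedD(4)[OF R] by blast
  qed simp
next
  case (Suc n)
  from Suc.prems(1) obtain q where q: "(r, q) \<in> T ^^ n" "(q, v) \<in> T"
    by (meson relpow_Suc_E)
  show ?case
  proof (cases m)
    case 0
    with Suc.prems(2) q(2) show ?thesis using rootedD(4)[OF R] by simp
  next
    case (Suc k)
    with Suc.prems(2) obtain q' where q': "(r, q') \<in> T ^^ k" "(q', v) \<in> T"
      by (meson relpow_Suc_E)
    have "q = q'" using rooted_parent_unique[OF R q(2) q'(2)] .
    with Suc.IH[OF q(1)] q'(1) \<open>m = Suc k\<close> show ?thesis by simp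
  qed
qed

lemma depth_eq:
  assumes "rooted V T r" "(r, v) \<in> T ^^ n"
  shows "depth T r v = n"
  unfolding depth_def using rooted_relpow_unique[OF assms(1)] assms(2) by (metis the_equality)

lemma depth_arc:
  assumes R: "rooted V T r" and "(p, c) \<in> T"
  shows "depth T r c = Suc (depth T r p)"
proof -
  have "(r, p) \<in> T\<^sup>*" using assms rootedD(2,6)[OF R] by blast
  then obtain n where n: "(r, p) \<in> T ^^ n" using rtrancl_power by blast
  then have "(r, c) \<in> T ^^ Suc n" using assms(2) by auto
  then show ?thesis using depth_eq[OF R n] depth_eq[OF R] by simp
qed

lemma depth_less_trancl:
  assumes R: "rooted V T r" and "(x, y) \<in> T\<^sup>+"
  shows "depth T r x < depth T r y"
  using assms(2)
proof induction
  case (base y) then show ?case using depth_arc[OF R, of x y] by simp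
next
  case (step y z) then show ?case using depth_arc[OF R, of y z] by simp
qed

lemma rooted_acyclic: "rooted V T r \<Longrightarrow> acyclic T"
  unfolding acyclic_def using depth_less_trancl by (metis less_irrefl)

lemma has_ucycle_neighbours:
  assumes "has_ucycle N E"
  obtains C where "C \<subseteq> N" "finite C" "C \<noteq> {}"
    "\<And>v. v \<in> C \<Longrightarrow> \<exists>u\<in>C. \<exists>w\<in>C. u \<noteq> w \<and> {v, u} \<in> E \<and> {v, w} \<in> E"
proof -
  obtain vs where len: "length vs \<ge> 3" and dist: "distinct vs" and sub: "set vs \<subseteq> N"
    and adj: "\<And>i. Suc i < length vs \<Longrightarrow> {vs ! i, vs ! Suc i} \<in> E"
    and closing: "{last vs, hd vs} \<in> E"
    using assms unfolding has_ucycle_def by blast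
  define n where "n = length vs"
  define following where "following i = (if Suc i = n then 0 else Suc i)" for i
  have following_less: "following i < n" if "i < n" for i
    using that len n_def unfolding following_def by auto
  have succ: "{vs ! i, vs ! following i} \<in> E" if "i < n" for i
  proof (cases "Suc i = n")
    case True
    moreover have "vs \<noteq> []" "i = n - 1" using len True by auto
    ultimately show ?thesis
      using closing n_def unfolding following_def by (simp add: last_conv_nth hd_conv_nth)
  next
    case False then show ?thesis using adj that n_def unfolding following_def by simp
  qed
  have "\<exists>u\<in>set vs. \<exists>w\<in>set vs. u \<noteq> w \<and> {v, u} \<in> E \<and> {v, w} \<in> E" if v: "v \<in> set vs" for v
  proof -
    obtain i where i: "i < n" "v = vs ! i" using v unfolding n_def in_set_conv_nth by blast
    define j where "j = (if i = 0 then n - 1 else i - 1)"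
    have j: "j < n" "following j = i" "following i \<noteq> j"
      using i len n_def unfolding j_def following_def by auto
    have "vs ! following i \<noteq> vs ! j"
      using dist j following_less[OF i(1)] n_def by (simp add: nth_eq_iff_index_eq)
    moreover have "{v, vs ! j} \<in> E" using succ[OF j(1)] j(2) i(2) by (simp add: insert_commute)
    moreover have "vs ! following i \<in> set vs" "vs ! j \<in> set vs"
      using following_less[OF i(1)] j(1) n_def by simp_all
    ultimately show ?thesis using succ[OF i(1)] i(2) by blast
  qed
  moreover have "set vs \<noteq> {}" using len by auto
  ultimately show ?thesis using that[of "set vs"] sub by blast
qed

lemma rooted_no_ucycle:
  assumes R: "rooted V T r"
  shows "\<not> has_ucycle V (uedges T)"
proof
  assume "has_ucycle V (uedges T)"
  then obtain C where C: "C \<subseteq> V" "finite C" "C \<noteq> {}"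
    and nbrs: "\<And>v. v \<in> C \<Longrightarrow> \<exists>u\<in>C. \<exists>w\<in>C. u \<noteq> w \<and> {v, u} \<in> uedges T \<and> {v, w} \<in> uedges T"
    by (rule has_ucycle_neighbours[of V "uedges T"]) blast+
  \<comment> \<open>a deepest vertex of the cycle would have both of its cycle neighbours as parents\<close>
  have "Max (depth T r ` C) \<in> depth T r ` C" using C(2,3) by simp
  then obtain v where v: "v \<in> C" "depth T r v = Max (depth T r ` C)" by (metis imageE)
  have deepest: "depth T r u \<le> depth T r v" if "u \<in> C" for u
    using C(2) that unfolding v(2) by simp
  have parent: "(u, v) \<in> T" if u: "u \<in> C" and uv: "{v, u} \<in> uedges T" for u
  proof -
    obtain a b where "{v, u} = {a, b}" "(a, b) \<in> T" using uv unfolding uedges_def by blast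
    then have "(u, v) \<in> T \<or> (v, u) \<in> T" by (auto simp: doubleton_eq_iff)
    moreover have "(v, u) \<notin> T" using depth_arc[OF R, of v u] deepest[OF u] by auto
    ultimately show ?thesis by blast
  qed
  from nbrs[OF v(1)] obtain u w where "u \<in> C" "w \<in> C" "u \<noteq> w" "{v, u} \<in> uedges T" "{v, w} \<in> uedges T"
    by blast
  then show False using parent rooted_parent_unique[OF R] by blast
qed

lemma uconnected_uedgesI:
  assumes "x \<in> S" and reach: "\<And>i. i \<in> S \<Longrightarrow> (x, i) \<in> (T \<inter> S \<times> S)\<^sup>*"
  shows "uconnected S (uedges T)"
proof -
  let ?E = "{(p, q). p \<in> S \<and> q \<in> S \<and> {p, q} \<in> uedges T}"
  have "T \<inter> S \<times> S \<subseteq> ?E" unfolding uedges_def by blast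
  then have from_x: "(x, i) \<in> ?E\<^sup>*" if i: "i \<in> S" for i
    using rtrancl_mono reach[OF i] by blast
  have "?E\<inverse> = ?E" by (auto simp: insert_commute)
  then have "(i, x) \<in> ?E\<^sup>*" if i: "i \<in> S" for i
    using rtrancl_converseI[OF from_x[OF i]] by simp
  then show ?thesis unfolding uconnected_def using from_x by (meson rtrancl_trans)
qed

lemma rooted_imp_out_tree:
  assumes R: "rooted V T r"
  shows "out_tree V T"
proof -
  note sub = rootedD(2)[OF R]
  have "\<exists>a b. e = {a, b} \<and> a \<noteq> b \<and> a \<in> V \<and> b \<in> V" if e: "e \<in> uedges T" for e
  proof -
    obtain a b where ab: "e = {a, b}" "(a, b) \<in> T" using e unfolding uedges_def by blast
    then have "a \<noteq> b" using rooted_acyclic[OF R] by (auto simp: acyclic_def)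
    then show ?thesis using ab sub by blast
  qed
  moreover have "uconnected V (uedges T)"
    using rootedD(3,6)[OF R] sub Int_absorb2[OF sub] by (intro uconnected_uedgesI) auto
  moreover have "indeg T r = 0" unfolding indeg_def using rootedD(4)[OF R] by simp
  moreover have "indeg T v = 1" if v: "v \<in> V - {r}" for v
  proof -
    obtain u where "(u, v) \<in> T" "\<And>u'. (u', v) \<in> T \<Longrightarrow> u' = u" using rootedD(5)[OF R] v by blast
    then have "{u. (u, v) \<in> T} = {u}" by blast
    then show ?thesis unfolding indeg_def by simp
  qed
  ultimately show ?thesis
    unfolding out_tree_def utree_def
    using rootedD(1,3)[OF R] sub rooted_no_ucycle[OF R] by blast
qed

lemma out_tree_imp_rooted:
  assumes O: "out_tree V T"
  obtains r where "rooted V T r"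
proof -
  have sub: "T \<subseteq> V \<times> V" and fin: "finite V" and conn: "uconnected V (uedges T)"
    using O unfolding out_tree_def utree_def by blast+
  obtain r where rV: "r \<in> V" and r0: "indeg T r = 0" and one: "\<And>v. v \<in> V - {r} \<Longrightarrow> indeg T v = 1"
    using O unfolding out_tree_def by blast
  have no_parent: "(u, r) \<notin> T" for u
    using r0 finite_in_arcs[OF fin sub, of r] unfolding indeg_def by auto
  have unique: "\<exists>!u. (u, v) \<in> T" if v: "v \<in> V - {r}" for v
  proof -
    obtain u where "{u. (u, v) \<in> T} = {u}"
      using one[OF v] unfolding indeg_def by (rule card_1_singletonE)
    then have "\<And>w. (w, v) \<in> T \<longleftrightarrow> w = u" by (simp add: set_eq_iff)
    then show ?thesis by (intro ex1I[of _ u]) simp_all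
  qed
  let ?E = "{(p, q). p \<in> V \<and> q \<in> V \<and> {p, q} \<in> uedges T}"
  have "(r, v) \<in> T\<^sup>*" if "(r, v) \<in> ?E\<^sup>*" for v
    using that
  proof (induction rule: rtrancl_induct)
    case (step y z)
    then have "y \<in> V" "(y, z) \<in> T \<or> (z, y) \<in> T"
      unfolding uedges_def by (auto simp: doubleton_eq_iff)
    then consider "(y, z) \<in> T" | "(z, y) \<in> T" "y \<in> V" by blast
    then show ?case
    proof cases
      case 1 with step.IH show ?thesis by (rule rtrancl.rtrancl_into_rtrancl)
    next
      case 2
      then have "y \<noteq> r" using no_parent by blast
      with step.IH obtain q where q: "(r, q) \<in> T\<^sup>*" "(q, y) \<in> T" by (metis rtranclE)
      have "q = z" using unique[of y] 2 \<open>y \<noteq> r\<close> q(2) by blast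
      with q(1) show ?thesis by simp
    qed
  qed simp
  then have "(r, v) \<in> T\<^sup>*" if "v \<in> V" for v
    using conn rV that unfolding uconnected_def by blast
  then have "rooted V T r" unfolding rooted_def using fin sub rV no_parent unique by blast
  then show ?thesis by (rule that)
qed

lemma rooted_out_root:
  assumes R: "rooted V T r"
  shows "out_root V T = r"
  unfolding out_root_def
proof (rule the_equality)
  show "r \<in> V \<and> indeg T r = 0" unfolding indeg_def using rootedD(3,4)[OF R] by simp
next
  fix x assume x: "x \<in> V \<and> indeg T x = 0"
  show "x = r"
  proof (rule ccontr)
    assume "x \<noteq> r"
    then obtain u where "(u, x) \<in> T" using rootedD(5)[OF R] x by blast
    moreover have "finite {u. (u, x) \<in> T}" using finite_in_arcs rootedD(1,2)[OF R] .
    ultimately show False using x unfolding indeg_def by auto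
  qed
qed

lemma one_change_iff:
  "(x, y) \<in> one_change T (a, b) \<longleftrightarrow> (x, y) \<in> T \<and> y \<noteq> b \<or> (x, y) = (a, b)"
  unfolding one_change_def by auto

lemma one_change_rooted:
  assumes R: "rooted V T r" and "a \<in> V" "b \<in> V" "b \<noteq> r" and not_desc: "(b, a) \<notin> T\<^sup>*"
  shows "rooted V (one_change T (a, b)) r"
proof -
  let ?T = "one_change T (a, b)"
  have unique: "\<exists>!u. (u, v) \<in> ?T" if v: "v \<in> V - {r}" for v
  proof (cases "v = b")
    case False
    then show ?thesis using rootedD(5)[OF R] v unfolding one_change_iff by auto
  qed (auto simp: one_change_iff)
  \<comment> \<open>vertices outside the subtree of b keep their T-path from r; the others are reached via a\<close>
  have avoiding: "(r, v) \<in> ?T\<^sup>*" if "(r, v) \<in> T\<^sup>*" "(b, v) \<notin> T\<^sup>*" for v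
    using that
  proof (induction rule: rtrancl_induct)
    case (step y z)
    then have "(b, y) \<notin> T\<^sup>*" "z \<noteq> b" by (auto intro: rtrancl_into_rtrancl)
    with step.IH step(2) show ?case by (auto simp: one_change_iff intro: rtrancl_into_rtrancl)
  qed simp
  have rb: "(r, b) \<in> ?T\<^sup>*"
    using avoiding[OF rootedD(6)[OF R \<open>a \<in> V\<close>] not_desc]
    by (auto simp: one_change_iff intro: rtrancl_into_rtrancl)
  have below: "(r, v) \<in> ?T\<^sup>*" if "(b, v) \<in> T\<^sup>*" for v
    using that
  proof (induction rule: rtrancl_induct)
    case base
    show ?case by (rule rb)
  next
    case (step y z)
    have "z \<noteq> b" using rooted_acyclic[OF R] step(1,2) by (auto simp: acyclic_def intro: rtrancl_into_trancl1)
    with step show ?case by (auto simp: one_change_iff intro: rtrancl_into_rtrancl)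
  qed
  have "(r, v) \<in> ?T\<^sup>*" if "v \<in> V" for v
    using avoiding below rootedD(6)[OF R that] by blast
  moreover have "?T \<subseteq> V \<times> V" using rootedD(2)[OF R] assms(2,3) unfolding one_change_def by auto
  moreover have "(u, r) \<notin> ?T" for u using rootedD(4)[OF R] \<open>b \<noteq> r\<close> by (simp add: one_change_iff)
  ultimately show ?thesis unfolding rooted_def using rootedD(1,3)[OF R] unique by blast
qed

lemma Leaf_eq:
  assumes "finite V" "T \<subseteq> V \<times> V"
  shows "Leaf V T = {v \<in> V. \<forall>w. (v, w) \<notin> T}"
  unfolding Leaf_def outdeg_def using finite_out_arcs[OF assms] by auto

lemma not_branch_vertex_child_unique:
  assumes "finite V" "T \<subseteq> V \<times> V" "\<not> branch_vertex T p" "(p, b) \<in> T" "(p, w) \<in> T"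
  shows "w = b"
proof (rule ccontr)
  assume "w \<noteq> b"
  then have "card {b, w} \<le> outdeg T p"
    unfolding outdeg_def using assms(4,5) by (intro card_mono[OF finite_out_arcs[OF assms(1,2)]]) auto
  with \<open>w \<noteq> b\<close> assms(3) show False unfolding branch_vertex_def by simp
qed

lemma Leaf_one_change:
  assumes fin: "finite V" and sub: "T \<subseteq> V \<times> V" "one_change T (a, b) \<subseteq> V \<times> V"
    and pb: "(p, b) \<in> T" and only_parent: "\<And>u. (u, b) \<in> T \<Longrightarrow> u = p"
    and only_child: "\<And>w. (p, w) \<in> T \<Longrightarrow> w = b"
    and "a \<notin> Leaf V T" "a \<noteq> p"
  shows "Leaf V (one_change T (a, b)) = insert p (Leaf V T)"
proof -
  have "(\<forall>w. (x, w) \<notin> one_change T (a, b)) \<longleftrightarrow> x = p \<or> (\<forall>w. (x, w) \<notin> T)" if "x \<in> V" for x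
    using assms(7,8) that only_parent only_child unfolding Leaf_eq[OF fin sub(1)]
    by (auto simp: one_change_iff)
  moreover have "p \<in> V" using pb sub(1) by blast
  ultimately show ?thesis unfolding Leaf_eq[OF fin sub(1)] Leaf_eq[OF fin sub(2)] by auto
qed

lemma one_optimal_parent_branch_vertex:
  assumes dg: "digraph V A" and opt: "one_optimal V A T" and R: "rooted V T r"
    and ab: "(a, b) \<in> A" "(a, b) \<notin> T" and not_desc: "(b, a) \<notin> T\<^sup>*"
    and a: "a \<notin> Leaf V T" and pb: "(p, b) \<in> T"
  shows "branch_vertex T p"
proof (rule ccontr)
  assume not_branch: "\<not> branch_vertex T p"
  let ?T = "one_change T (a, b)"
  note fin = rootedD(1)[OF R] and sub = rootedD(2)[OF R]
  have "a \<in> V" "b \<in> V" using ab(1) dg unfolding digraph_def by auto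
  have "b \<noteq> r" using not_desc rootedD(6)[OF R \<open>a \<in> V\<close>] by blast
  have R': "rooted V ?T r" by (rule one_change_rooted) fact+
  have "?T \<subseteq> A"
    using opt ab(1) unfolding one_optimal_def out_branching_def one_change_def by blast
  then have "out_branching V A ?T"
    unfolding out_branching_def using rooted_imp_out_tree[OF R'] by blast
  then have no_gain: "\<not> card (Leaf V ?T) > card (Leaf V T)"
    using opt ab \<open>b \<noteq> r\<close> unfolding one_optimal_def rooted_out_root[OF R] by blast
  have "Leaf V ?T = insert p (Leaf V T)"
  proof (rule Leaf_one_change[OF fin sub rootedD(2)[OF R'] pb])
    show "\<And>u. (u, b) \<in> T \<Longrightarrow> u = p" using rooted_parent_unique[OF R] pb by blast
    show "\<And>w. (p, w) \<in> T \<Longrightarrow> w = b"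
      using not_branch_vertex_child_unique[OF fin sub not_branch pb] .
    show "a \<notin> Leaf V T" "a \<noteq> p" using a pb ab(2) by auto
  qed
  moreover have "p \<notin> Leaf V T" using pb unfolding Leaf_eq[OF fin sub] by blast
  moreover have "finite (Leaf V T)" using fin unfolding Leaf_def by simp
  ultimately show False using no_gain by simp
qed

definition bag :: "'a set \<Rightarrow> ('a \<times> 'a) set \<Rightarrow> ('a \<times> 'a) set \<Rightarrow> 'a \<Rightarrow> 'a set" where
  "bag V A T v = {v} \<union> {u. (u, v) \<in> T} \<union> BrSucc T \<union> Leaf V T \<union> Head (Back A T v)"

lemma Head_Back_iff:
  "x \<in> Head (Back A T i) \<longleftrightarrow> (\<exists>a. (a, x) \<in> A \<and> prec T x i \<and> preceq T i a)"
  unfolding Head_def Back_def by force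

lemma bag_iff:
  "x \<in> bag V A T v \<longleftrightarrow>
     x = v \<or> (x, v) \<in> T \<or> x \<in> BrSucc T \<or> x \<in> Leaf V T \<or> x \<in> Head (Back A T v)"
  unfolding bag_def by simp

lemma arc_in_bag:
  assumes dg: "digraph V A" and opt: "one_optimal V A T" and R: "rooted V T r"
    and ab: "(a, b) \<in> A"
  shows "\<exists>i\<in>V. a \<in> bag V A T i \<and> b \<in> bag V A T i"
proof -
  have "a \<in> V" "b \<in> V" using ab dg unfolding digraph_def by auto
  consider "b \<in> BrSucc T \<or> b \<in> Leaf V T \<or> a \<in> Leaf V T" | "(a, b) \<in> T" | "(b, a) \<in> T\<^sup>*"
    | "b \<notin> BrSucc T" "a \<notin> Leaf V T" "(a, b) \<notin> T" "(b, a) \<notin> T\<^sup>*"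
    by blast
  then show ?thesis
  proof cases
    case 1
    then show ?thesis using \<open>a \<in> V\<close> \<open>b \<in> V\<close> unfolding bag_iff by blast
  next
    case 2
    then show ?thesis using \<open>b \<in> V\<close> unfolding bag_iff by blast
  next
    case 3
    then have "a = b \<or> b \<in> Head (Back A T a)"
      using ab unfolding Head_Back_iff prec_def preceq_def by blast
    then show ?thesis using \<open>a \<in> V\<close> unfolding bag_iff by blast
  next
    case 4
    have "b \<noteq> r" using 4(4) rootedD(6)[OF R \<open>a \<in> V\<close>] by blast
    then obtain p where "(p, b) \<in> T" using rootedD(5)[OF R \<open>b \<in> V\<close>] by blast
    with one_optimal_parent_branch_vertex[OF dg opt R ab 4(3,4,2)] 4(1) show ?thesis
      unfolding BrSucc_def by blast
  qed
qed

lemma bag_subset: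
  assumes "digraph V A" "rooted V T r" "v \<in> V"
  shows "bag V A T v \<subseteq> V"
  using assms rootedD(2)[OF assms(2)]
  unfolding bag_def digraph_def BrSucc_def Leaf_def Head_def Back_def by auto

lemma bags_containing_connected:
  assumes R: "rooted V T r" and x: "x \<in> V"
  shows "uconnected {i \<in> V. x \<in> bag V A T i} (uedges T)"
proof (cases "x \<in> BrSucc T \<or> x \<in> Leaf V T")
  case True
  then have "{i \<in> V. x \<in> bag V A T i} = V" unfolding bag_iff by blast
  then show ?thesis using rooted_imp_out_tree[OF R] unfolding out_tree_def utree_def by simp
next
  case False
  define S where "S = {i \<in> V. x \<in> bag V A T i}"
  have S_iff: "i \<in> S \<longleftrightarrow> i \<in> V \<and> (i = x \<or> (x, i) \<in> T \<or> x \<in> Head (Back A T i))" for i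
    unfolding S_def bag_iff using False by blast
  have "x \<in> S" using x S_iff by blast
  moreover have "(x, i) \<in> (T \<inter> S \<times> S)\<^sup>*" if "i \<in> S" for i
  proof -
    consider "i = x" | "(x, i) \<in> T" | a where "(a, x) \<in> A" "prec T x i" "preceq T i a"
      using \<open>i \<in> S\<close> unfolding S_iff Head_Back_iff by blast
    then show ?thesis
    proof cases
      case 2
      then show ?thesis using \<open>i \<in> S\<close> x S_iff by blast
    next
      case (3 a)
      have "(x, j) \<in> (T \<inter> S \<times> S)\<^sup>*" if "(x, j) \<in> T\<^sup>*" "(j, a) \<in> T\<^sup>*" for j
        using that
      proof (induction rule: rtrancl_induct)
        case (step y z)
        have "(y, a) \<in> T\<^sup>*" using step(2,4) by (rule converse_rtrancl_into_rtrancl)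
        have between: "w \<in> S" if "(x, w) \<in> T\<^sup>*" "(w, a) \<in> T\<^sup>*" "w \<in> V" for w
          using that 3(1) unfolding S_iff Head_Back_iff prec_def preceq_def by blast
        have "y \<in> V" "z \<in> V" using step(2) rootedD(2)[OF R] by auto
        then have "y \<in> S" "z \<in> S"
          using between step(1,4) \<open>(y, a) \<in> T\<^sup>*\<close> rtrancl_into_rtrancl[OF step(1,2)] by blast+
        with step.IH[OF \<open>(y, a) \<in> T\<^sup>*\<close>] step(2) show ?case
          by (meson IntI SigmaI rtrancl.rtrancl_into_rtrancl)
      qed simp
      with 3 show ?thesis unfolding prec_def preceq_def by blast
    qed simp
  qed
  ultimately show ?thesis unfolding S_def[symmetric] by (rule uconnected_uedgesI)
qed

theorem lemma1:
  assumes "digraph V A"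
    and "one_optimal V A T"
  shows "tree_decomposition V A V (uedges T)
           (\<lambda>v. {v} \<union> {u. (u, v) \<in> T} \<union> BrSucc T \<union> Leaf V T \<union> Head (Back A T v))"
proof -
  have "out_tree V T" using assms(2) unfolding one_optimal_def out_branching_def by blast
  then obtain r where R: "rooted V T r" by (rule out_tree_imp_rooted)
  have self: "\<And>v. v \<in> bag V A T v" unfolding bag_def by simp
  have "utree V (uedges T)" using rooted_imp_out_tree[OF R] unfolding out_tree_def by blast
  moreover have "\<forall>i\<in>V. bag V A T i \<subseteq> V" using bag_subset[OF assms(1) R] by blast
  moreover have "(\<Union>i\<in>V. bag V A T i) = V"
    using bag_subset[OF assms(1) R] self by blast
  moreover have "\<forall>(x, y)\<in>A. \<exists>i\<in>V. x \<in> bag V A T i \<and> y \<in> bag V A T i"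
    using arc_in_bag[OF assms R] by blast
  moreover have "\<forall>x\<in>V. uconnected {i \<in> V. x \<in> bag V A T i} (uedges T)"
    using bags_containing_connected[OF R] by blast
  ultimately have "tree_decomposition V A V (uedges T) (bag V A T)"
    unfolding tree_decomposition_def by blast
  then show ?thesis unfolding bag_def[abs_def] .
qed

end
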